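(* Let $f:\mathbb{R}\to\mathbb{R}$ be $f(y)=\sum_{k=0}^\infty 2^{-k}\|2^{k^2}y\|$, where $\|t\|=\operatorname{dist}(t,\mathbb{Z})$. Then $f$ is continuous and has no $\mathsf{M}$-points. Consequently every monotone subset of the graph of $f$ is meager in the graph, and $f$ has a derivative (finite or infinite) at no point.
   Context: With $\psi(x)=(x,f(x))$ and the Euclidean norm, $y$ is an $\mathsf{M}$-point of $f$ if there are $c\ge1$ and $\varepsilon>0$ with $|\psi(x)-\psi(y)|\le c|\psi(x)-\psi(z)|$ for all $x\in(y-\varepsilon,y)$, $z\in(y,y+\varepsilon)$. A metric space is monotone if there are a linear order $<$ and $c>0$ with $d(x,y)\le c\,d(x,z)$ whenever $x<y<z$. *)

theory Defs
  imports "HOL-Analysis.Analysis"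
begin

definition dZ :: "real \<Rightarrow> real" where
  "dZ t = infdist t \<int>"

definition f48 :: "real \<Rightarrow> real" where
  "f48 y = (\<Sum>k. (1/2) ^ k * dZ (2 ^ (k^2) * y))"

text \<open>Graph map; the product metric on real \<times> real is the Euclidean one.\<close>
definition psi :: "(real \<Rightarrow> real) \<Rightarrow> real \<Rightarrow> real \<times> real" where
  "psi f x = (x, f x)"

definition M_point :: "(real \<Rightarrow> real) \<Rightarrow> real \<Rightarrow> bool" where
  "M_point f y \<longleftrightarrow> (\<exists>c\<ge>1. \<exists>\<epsilon>>0. \<forall>x\<in>{y-\<epsilon><..<y}. \<forall>z\<in>{y<..<y+\<epsilon>}.
      dist (psi f x) (psi f y) \<le> c * dist (psi f x) (psi f z))"

definition graph :: "(real \<Rightarrow> real) \<Rightarrow> (real \<times> real) set" where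
  "graph f = range (psi f)"

definition monotone_metric :: "'a::metric_space set \<Rightarrow> bool" where
  "monotone_metric S \<longleftrightarrow> (\<exists>r c. strict_linear_order_on S r \<and> c > 0 \<and>
     (\<forall>x\<in>S. \<forall>y\<in>S. \<forall>z\<in>S. (x,y) \<in> r \<and> (y,z) \<in> r \<longrightarrow> dist x y \<le> c * dist x z))"

definition nowhere_dense_in :: "'a topology \<Rightarrow> 'a set \<Rightarrow> bool" where
  "nowhere_dense_in X A \<longleftrightarrow> A \<subseteq> topspace X \<and> X interior_of (X closure_of A) = {}"

definition meager_in :: "'a topology \<Rightarrow> 'a set \<Rightarrow> bool" where
  "meager_in X A \<longleftrightarrow> (\<exists>F. countable F \<and> (\<forall>N\<in>F. nowhere_dense_in X N) \<and> A \<subseteq> \<Union>F)"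

end

theory Submission
  imports Defs
begin

text \<open>
  No \<open>M\<close>-points: at scale \<open>N\<close> the first \<open>N\<close> terms of \<open>f48\<close> form a function with Lipschitz
  constant about \<open>N 2^(N-1)\<^sup>2\<close>, while the remaining tail is \<open>2^(1-N\<^sup>2)\<close>-periodic and still
  oscillates by \<open>2^-(N+1)\<close> inside every interval of length \<open>2^-N\<^sup>2\<close>. Testing the \<open>M\<close>-point
  inequality with \<open>z = x + 2^(1-N\<^sup>2)\<close> bounds \<open>\<bar>f48 x - f48 y\<bar>\<close> by the Lipschitz part alone,
  which for large \<open>N\<close> is too small for this oscillation.

  Meagreness: project a monotone subset of the graph to \<open>P \<subseteq> \<real>\<close>. Points of \<open>P\<close> outside the
  interior of its closure form a nowhere dense set. Near a point \<open>u\<close> of that interior, the order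
  cannot change on either side of \<open>u\<close>, since that would leave a gap in \<open>P\<close>; so \<open>u\<close> is a local
  maximum or minimum of the order (these form uniformly discrete sets at each scale), or the
  monotonicity inequality, extended to the closure, makes \<open>u\<close> or, by evenness, \<open>-u\<close> an
  \<open>M\<close>-point. Finally, a finite or infinite derivative at \<open>x\<close> makes \<open>x\<close> an \<open>M\<close>-point.
\<close>

section \<open>Distance to the nearest integer\<close>

lemma dZ_floor_ceiling: "dZ t = min (t - of_int \<lfloor>t\<rfloor>) (of_int \<lceil>t\<rceil> - t)"
proof -
  have ne: "(\<int>::real set) \<noteq> {}" by auto
  let ?d = "min (t - of_int \<lfloor>t\<rfloor>) (of_int \<lceil>t\<rceil> - t)"
  have "infdist t \<int> \<le> dist t (of_int \<lfloor>t\<rfloor>)" "infdist t \<int> \<le> dist t (of_int \<lceil>t\<rceil>)"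
    by (rule infdist_le, simp)+
  then have le: "infdist t \<int> \<le> ?d" by (simp add: dist_real_def)
  have ge: "?d \<le> infdist t \<int>"
    unfolding infdist_notempty[OF ne]
  proof (rule cINF_greatest[OF ne])
    fix m :: real assume "m \<in> \<int>"
    then obtain i where i: "m = of_int i" by (auto elim: Ints_cases)
    show "?d \<le> dist t m"
    proof (cases "m \<le> t")
      case True
      then have "m \<le> of_int \<lfloor>t\<rfloor>" using i by (simp add: le_floor_iff)
      then show ?thesis using True by (simp add: dist_real_def)
    next
      case False
      then have "of_int \<lceil>t\<rceil> \<le> m" using i by (simp add: ceiling_le_iff)
      then show ?thesis using False by (simp add: dist_real_def)
    qed
  qed
  show ?thesis unfolding dZ_def using le ge by linarith
qed

lemma dZ_nonneg: "0 \<le> dZ t"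
  unfolding dZ_def by (rule infdist_nonneg)

lemma dZ_le_half: "dZ t \<le> 1/2"
  using ceiling_diff_floor_le_1[of t] unfolding dZ_floor_ceiling by linarith

lemma dZ_of_int: "dZ (of_int m) = 0"
  unfolding dZ_floor_ceiling by simp

lemma dZ_of_int_add_half: "dZ (of_int m + 1/2) = 1/2"
proof -
  have "\<lfloor>of_int m + 1/2 :: real\<rfloor> = m" "\<lceil>of_int m + 1/2 :: real\<rceil> = m + 1" by linarith+
  then show ?thesis unfolding dZ_floor_ceiling by simp
qed

lemma dZ_lipschitz: "\<bar>dZ s - dZ t\<bar> \<le> \<bar>s - t\<bar>"
  unfolding dZ_def using infdist_triangle_abs[of s \<int> t] by (simp add: dist_real_def)

lemma dZ_add_of_int: "dZ (t + of_int m) = dZ t"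
  unfolding dZ_floor_ceiling by (simp add: floor_add_int[symmetric])

lemma dZ_minus: "dZ (- t) = dZ t"
  unfolding dZ_floor_ceiling by (simp add: floor_minus ceiling_minus)

lemma continuous_on_dZ: "continuous_on UNIV dZ"
  unfolding dZ_def[abs_def] by (intro continuous_intros)

section \<open>Partial sums and tails of \<open>f48\<close>\<close>

definition f48_term :: "nat \<Rightarrow> real \<Rightarrow> real" where
  "f48_term k y = (1/2)^k * dZ (2 ^ (k^2) * y)"

definition f48_partial :: "nat \<Rightarrow> real \<Rightarrow> real" where
  "f48_partial N y = (\<Sum>k<N. f48_term k y)"

definition f48_tail :: "nat \<Rightarrow> real \<Rightarrow> real" where
  "f48_tail N y = (\<Sum>i. f48_term (i + N) y)"

lemma f48_term_nonneg: "0 \<le> f48_term k y"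
  unfolding f48_term_def using dZ_nonneg by simp

lemma f48_term_le: "f48_term k y \<le> (1/2)^k"
  using dZ_le_half[of "2 ^ (k^2) * y"] unfolding f48_term_def by (simp add: mult_left_le)

lemma summable_f48_term: "summable (\<lambda>k. f48_term k y)"
  by (rule summable_comparison_test[of _ "\<lambda>k. (1/2::real)^k"])
     (auto simp: f48_term_nonneg f48_term_le summable_geometric)

lemma f48_eq_partial_add_tail: "f48 y = f48_partial N y + f48_tail N y"
  using suminf_split_initial_segment[OF summable_f48_term, of y N]
  unfolding f48_def f48_partial_def f48_tail_def f48_term_def by simp

lemma continuous_on_f48: "continuous_on UNIV f48"
proof -
  have "uniform_limit UNIV (\<lambda>n x. \<Sum>k<n. f48_term k x) (\<lambda>x. \<Sum>k. f48_term k x) sequentially"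
    by (rule Weierstrass_m_test_ev[where M="\<lambda>k. (1/2)^k"])
       (auto simp: f48_term_nonneg f48_term_le summable_geometric)
  moreover have "continuous_on UNIV (f48_term k)" for k
    unfolding f48_term_def[abs_def]
    by (intro continuous_intros continuous_on_compose2[OF continuous_on_dZ]) auto
  ultimately have "continuous_on UNIV (\<lambda>x. \<Sum>k. f48_term k x)"
    by (intro uniform_limit_theorem) (auto intro!: always_eventually continuous_on_sum)
  then show ?thesis unfolding f48_def f48_term_def .
qed

lemma f48_minus: "f48 (- y) = f48 y"
  unfolding f48_def by (simp add: dZ_minus[of "2 ^ _ * y", simplified])

lemma f48_term_lipschitz: "\<bar>f48_term k x - f48_term k w\<bar> \<le> 2^(k^2) * \<bar>x - w\<bar>"
proof -
  have "\<bar>f48_term k x - f48_term k w\<bar> = (1/2)^k * \<bar>dZ (2^(k^2) * x) - dZ (2^(k^2) * w)\<bar>"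
    unfolding f48_term_def by (simp add: abs_mult right_diff_distrib[symmetric])
  also have "\<dots> \<le> 1 * \<bar>2^(k^2) * x - 2^(k^2) * w\<bar>"
    by (rule mult_mono) (auto simp: dZ_lipschitz power_le_one)
  also have "\<dots> = 2^(k^2) * \<bar>x - w\<bar>" by (simp add: abs_mult right_diff_distrib[symmetric])
  finally show ?thesis .
qed

lemma f48_partial_lipschitz:
  "\<bar>f48_partial N x - f48_partial N w\<bar> \<le> real N * 2^((N-1)^2) * \<bar>x - w\<bar>"
proof -
  have "\<bar>f48_partial N x - f48_partial N w\<bar> \<le> (\<Sum>k<N. \<bar>f48_term k x - f48_term k w\<bar>)"
    unfolding f48_partial_def sum_subtractf[symmetric] by (rule sum_abs)
  also have "\<dots> \<le> (\<Sum>k<N. 2^((N-1)^2) * \<bar>x - w\<bar>)"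
  proof (rule sum_mono)
    fix k assume "k \<in> {..<N}"
    then have "(2::real)^(k^2) \<le> 2^((N-1)^2)" by (intro power_increasing power_mono) auto
    then show "\<bar>f48_term k x - f48_term k w\<bar> \<le> 2^((N-1)^2) * \<bar>x - w\<bar>"
      using f48_term_lipschitz[of k x w] by (meson abs_ge_zero mult_right_mono order_trans)
  qed
  finally show ?thesis by simp
qed

lemma two_power_square_split: "N \<le> j \<Longrightarrow> (2::real)^(j^2) = 2^(N^2) * 2^(j^2 - N^2)"
  by (simp add: power_mono power_add[symmetric])

lemma f48_tail_of_int:
  assumes "2^(N^2) * x = (of_int m :: real)"
  shows "f48_tail N x = 0"
proof -
  have "f48_term (i + N) x = 0" for i
  proof -
    have "(2::real)^((i+N)^2) * x = 2^((i+N)^2 - N^2) * (2^(N^2) * x)"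
      using two_power_square_split[of N "i+N"] by simp
    also have "\<dots> = of_int (2^((i+N)^2 - N^2) * m)" using assms by simp
    finally show ?thesis unfolding f48_term_def by (simp only: dZ_of_int mult_zero_right)
  qed
  then show ?thesis unfolding f48_tail_def by simp
qed

text \<open>At a half-integer multiple of \<open>2^-N\<^sup>2\<close> only the \<open>N\<close>-th term survives.\<close>
lemma f48_tail_of_int_add_half:
  assumes "2^(N^2) * x = (of_int m + 1/2 :: real)"
  shows "f48_tail N x = (1/2)^N / 2"
proof -
  have "(2::real)^((Suc N)^2) = 2^(N^2) * 2^(2*N+1)"
    by (simp add: power2_eq_square power_add[symmetric] algebra_simps)
  then have "(2::real)^((Suc N)^2) * x = 2^(2*N+1) * (of_int m + 1/2)"
    using assms by (simp add: mult.assoc mult.commute)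
  also have "\<dots> = of_int (2^(2*N+1) * m + 2^(2*N))" by (simp add: algebra_simps)
  finally have "f48_tail (Suc N) x = 0" by (rule f48_tail_of_int)
  moreover have "f48_tail (Suc N) x = f48_tail N x - f48_term N x"
    using suminf_split_head[of "\<lambda>i. f48_term (i + N) x"]
      summable_ignore_initial_segment[OF summable_f48_term[of x], of N]
    unfolding f48_tail_def by simp
  ultimately show ?thesis unfolding f48_term_def assms dZ_of_int_add_half by simp
qed

lemma f48_tail_periodic: "f48_tail N (x + 2/2^(N^2)) = f48_tail N x"
proof -
  have "f48_term (i + N) (x + 2/2^(N^2)) = f48_term (i + N) x" for i
  proof -
    have "(2::real)^((i+N)^2) * (x + 2/2^(N^2)) = 2^((i+N)^2) * x + of_int (2 * 2^((i+N)^2 - N^2))"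
      using two_power_square_split[of N "i+N"] by (simp add: algebra_simps)
    then show ?thesis unfolding f48_term_def by (simp only: dZ_add_of_int)
  qed
  then show ?thesis unfolding f48_tail_def by simp
qed

text \<open>The witnesses are points of \<open>2^-N\<^sup>2 \<int>\<close> and \<open>2^-N\<^sup>2 (\<int> + 1/2)\<close> just below \<open>y\<close>.\<close>
lemma f48_oscillation:
  "\<exists>a b. a \<in> {y - 1/2^(N^2)..<y} \<and> b \<in> {y - 1/2^(N^2)..<y} \<and>
     (1/2)^N / 2 - real N * 2^((N-1)^2) / 2^(N^2) \<le> f48 b - f48 a"
proof -
  define n :: real where "n = 2^(N^2)"
  define a where "a = of_int (\<lceil>n * y\<rceil> - 1) / n"
  define b where "b = (of_int (\<lceil>n * y + 1/2\<rceil> - 2) + 1/2) / n"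
  have n: "n > 0" unfolding n_def by simp
  have na: "n * a = of_int (\<lceil>n * y\<rceil> - 1)" and nb: "n * b = of_int (\<lceil>n * y + 1/2\<rceil> - 2) + 1/2"
    unfolding a_def b_def using n by simp_all
  have near: "x \<in> {y - 1/n..<y}" if "n * y - 1 \<le> n * x" "n * x < n * y" for x
    using that n by (auto simp: field_simps)
  have a: "a \<in> {y - 1/n..<y}" and b: "b \<in> {y - 1/n..<y}"
    using near[of a] near[of b] ceiling_correct[of "n * y"] ceiling_correct[of "n * y + 1/2"]
    unfolding na nb by linarith+
  have "f48 a = f48_partial N a"
    using f48_tail_of_int[OF na[unfolded n_def]] f48_eq_partial_add_tail[of a N] by simp
  moreover have "f48 b = f48_partial N b + (1/2)^N / 2"
    using f48_tail_of_int_add_half[OF nb[unfolded n_def]] f48_eq_partial_add_tail[of b N] by simp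
  moreover have "\<bar>f48_partial N b - f48_partial N a\<bar> \<le> real N * 2^((N-1)^2) * (1/n)"
  proof -
    have "\<bar>b - a\<bar> \<le> 1/n" using a b by auto
    then show ?thesis
      using f48_partial_lipschitz[of N b a]
      by (meson mult_left_mono order_trans of_nat_0_le_iff zero_le_mult_iff zero_le_numeral zero_le_power)
  qed
  ultimately show ?thesis using a b unfolding n_def by (intro exI[of _ a] exI[of _ b]) auto
qed

lemma f48_shift_bound:
  "\<bar>f48 (x + 2/2^(N^2)) - f48 x\<bar> \<le> real N * 2^((N-1)^2) * (2/2^(N^2))"
  using f48_partial_lipschitz[of N "x + 2/2^(N^2)" x]
  by (simp add: f48_eq_partial_add_tail[of _ N] f48_tail_periodic)

section \<open>Distances on the graph\<close>

lemma dist_psi_le: "dist (psi g x) (psi g z) \<le> \<bar>x - z\<bar> + \<bar>g x - g z\<bar>"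
  unfolding psi_def dist_Pair_Pair dist_real_def
  using sqrt_sum_squares_le_sum_abs[of "x - z" "g x - g z"] by simp

lemma abs_diff_le_dist_psi: "\<bar>x - z\<bar> \<le> dist (psi g x) (psi g z)"
  using dist_fst_le[of "psi g x" "psi g z"] unfolding psi_def by (simp add: dist_real_def)

lemma abs_diff_image_le_dist_psi: "\<bar>g x - g z\<bar> \<le> dist (psi g x) (psi g z)"
  using dist_snd_le[of "psi g x" "psi g z"] unfolding psi_def by (simp add: dist_real_def)

lemma dist_psi_mono:
  assumes "\<bar>x - y\<bar> \<le> \<bar>x - z\<bar>" "\<bar>g x - g y\<bar> \<le> \<bar>g x - g z\<bar>"
  shows "dist (psi g x) (psi g y) \<le> dist (psi g x) (psi g z)"
  using assms unfolding psi_def dist_Pair_Pair dist_real_def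
  by (intro real_sqrt_le_mono add_mono) (simp_all add: abs_le_square_iff)

lemma dist_psi_minus:
  assumes "\<And>t. g (- t) = g t"
  shows "dist (psi g (- a)) (psi g (- b)) = dist (psi g a) (psi g b)"
  unfolding psi_def dist_Pair_Pair dist_real_def using assms by (simp add: abs_minus_commute)

lemma continuous_on_psi: "continuous_on UNIV g \<Longrightarrow> continuous_on UNIV (psi g)"
  unfolding psi_def[abs_def] by (intro continuous_intros)

section \<open>\<open>f48\<close> has no \<open>M\<close>-points\<close>

lemma Suc_div_two_power_tendsto_zero: "(\<lambda>k. (real k + 1) / 2^k) \<longlonglongrightarrow> (0::real)"
proof -
  have "(\<lambda>k. real k / 2^k + (1/2::real)^k) \<longlonglongrightarrow> 0 + 0"
    using lim_n_over_pown[of "2::real"] LIMSEQ_realpow_zero[of "1/2::real"]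
    by (intro tendsto_add) simp_all
  then show ?thesis by (simp add: add_divide_distrib power_one_over)
qed

text \<open>With \<open>N = k + 1\<close>, \<open>p = 2^-N\<^sup>2\<close> and \<open>L = N 2^k\<^sup>2\<close> we get \<open>L p = q\<^sub>k 2^-N\<close> with
  \<open>q\<^sub>k = (k + 1) / 2^k\<close>, so a small \<open>q\<^sub>k\<close> makes \<open>L p (1 + 8c)\<close> smaller than the oscillation
  \<open>2^-(N+1)\<close> of \<open>f48\<close> on \<open>[y - p, y)\<close>.\<close>
lemma f48_not_M_point: "\<not> M_point f48 y"
proof
  assume "M_point f48 y"
  then obtain c \<epsilon> where c: "c \<ge> 1" and \<epsilon>: "\<epsilon> > 0" and M: "\<forall>x\<in>{y-\<epsilon><..<y}. \<forall>z\<in>{y<..<y+\<epsilon>}.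
      dist (psi f48 x) (psi f48 y) \<le> c * dist (psi f48 x) (psi f48 z)"
    unfolding M_point_def by blast
  define q where "q = (\<lambda>k::nat. (real k + 1) / 2^k)"
  have "min \<epsilon> (1 / (2 * (1 + 8*c))) > 0" using \<epsilon> c by simp
  from order_tendstoD(2)[OF Suc_div_two_power_tendsto_zero this]
  obtain k where "q k < min \<epsilon> (1 / (2 * (1 + 8*c)))"
    unfolding q_def eventually_sequentially by auto
  then have qk: "q k < \<epsilon>" "q k * (1 + 8*c) < 1/2"
    using c by (simp_all add: field_simps)
  define N where "N = Suc k"
  define p :: real where "p = 1 / 2^(N^2)"
  define L :: real where "L = real N * 2^((N-1)^2)"
  define t :: real where "t = 1 / 2^N"
  have t: "0 < t" "t \<le> 1/2" unfolding t_def N_def by (auto simp: field_simps)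
  have "N^2 = k^2 + (k + N)" unfolding N_def by (simp add: power2_eq_square)
  then have Lp: "L * p = q k * t"
    unfolding L_def p_def q_def t_def N_def by (simp add: power_add field_simps)
  have "1 * 1 \<le> L" unfolding L_def N_def by (intro mult_mono) auto
  then have p: "0 < p" "p \<le> L * p" unfolding p_def by (auto simp: divide_right_mono)
  have "2 * p \<le> q k" using p Lp t mult_left_mono[of t "1/2" "q k"] unfolding q_def by auto
  then have two_p: "2 * p < \<epsilon>" using qk by simp
  have near_y: "\<bar>f48 x - f48 y\<bar> \<le> 4 * c * (L * p)" if x: "x \<in> {y-p..<y}" for x
  proof -
    have "\<bar>f48 x - f48 y\<bar> \<le> dist (psi f48 x) (psi f48 y)" by (rule abs_diff_image_le_dist_psi)
    also have "\<dots> \<le> c * dist (psi f48 x) (psi f48 (x + 2*p))"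
      using M x two_p p by auto
    also have "\<dots> \<le> c * (2*p + L * (2*p))"
      using dist_psi_le[of f48 x "x + 2*p"] f48_shift_bound[of x N] c p
      unfolding p_def L_def by (intro mult_left_mono) (auto simp: abs_minus_commute)
    also have "\<dots> \<le> 4 * c * (L * p)" using p c by (simp add: algebra_simps)
    finally show ?thesis .
  qed
  obtain a b where ab: "a \<in> {y-p..<y}" "b \<in> {y-p..<y}" "t/2 - L * p \<le> f48 b - f48 a"
    using f48_oscillation[of y N] unfolding p_def L_def t_def by (auto simp: power_one_over)
  then have "t/2 \<le> L * p * (1 + 8*c)"
    using near_y[OF ab(1)] near_y[OF ab(2)] by (simp add: algebra_simps)
  also have "\<dots> < t/2" using mult_strict_left_mono[OF qk(2) t(1)] unfolding Lp by (simp add: algebra_simps)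
  finally show False by simp
qed

section \<open>Sufficient conditions for \<open>M\<close>-points\<close>

lemma M_point_if_bound:
  assumes "\<delta> > 0" and "\<And>x z. x \<in> {u-\<delta><..<u} \<Longrightarrow> z \<in> {u<..<u+\<delta>} \<Longrightarrow>
      dist (psi g x) (psi g u) \<le> c * dist (psi g x) (psi g z)"
  shows "M_point g u"
  unfolding M_point_def
proof (intro exI conjI ballI)
  fix x z assume "x \<in> {u-\<delta><..<u}" "z \<in> {u<..<u+\<delta>}"
  then show "dist (psi g x) (psi g u) \<le> max 1 c * dist (psi g x) (psi g z)"
    using assms(2) mult_right_mono[of c "max 1 c" "dist (psi g x) (psi g z)"] by fastforce
qed (use assms(1) in auto)

lemma M_point_minus_if_bound:
  assumes even: "\<And>t. g (- t) = g t" and "\<delta> > 0"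
    and bound: "\<And>x z. x \<in> {u<..<u+\<delta>} \<Longrightarrow> z \<in> {u-\<delta><..<u} \<Longrightarrow>
      dist (psi g x) (psi g u) \<le> c * dist (psi g x) (psi g z)"
  shows "M_point g (- u)"
proof (rule M_point_if_bound[OF \<open>\<delta> > 0\<close>])
  fix x z assume "x \<in> {- u - \<delta><..<- u}" "z \<in> {- u<..<- u + \<delta>}"
  then have "dist (psi g (- x)) (psi g (- (- u))) \<le> c * dist (psi g (- x)) (psi g (- z))"
    using bound[of "- x" "- z"] by auto
  then show "dist (psi g x) (psi g (- u)) \<le> c * dist (psi g x) (psi g z)"
    unfolding dist_psi_minus[of g, OF even] .
qed

lemma eventually_at_0_realE:
  assumes "eventually P (at (0::real))"
  obtains d where "d > 0" "\<And>h. h \<noteq> 0 \<Longrightarrow> \<bar>h\<bar> < d \<Longrightarrow> P h"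
  using assms unfolding eventually_at by (auto simp: dist_real_def)

lemma M_point_if_has_real_derivative:
  assumes "(g has_real_derivative D) (at x)"
  shows "M_point g x"
proof -
  have "((\<lambda>h. (g (x + h) - g x) / h) \<longlongrightarrow> D) (at 0)" using assms by (simp add: DERIV_def)
  then have "eventually (\<lambda>h. dist ((g (x + h) - g x) / h) D < 1) (at 0)"
    by (rule tendstoD) simp
  then obtain d where d: "d > 0"
    and quotient: "\<And>h. h \<noteq> 0 \<Longrightarrow> \<bar>h\<bar> < d \<Longrightarrow> \<bar>(g (x + h) - g x) / h - D\<bar> < 1"
    by (rule eventually_at_0_realE) (auto simp: dist_real_def)
  show ?thesis
  proof (rule M_point_if_bound[OF d])
    fix y z assume y: "y \<in> {x-d<..<x}" and z: "z \<in> {x<..<x+d}"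
    have "\<bar>(g y - g x) / (y - x) - D\<bar> < 1" using quotient[of "y - x"] y by auto
    then have "\<bar>(g y - g x) / (y - x)\<bar> < \<bar>D\<bar> + 1" by linarith
    then have "\<bar>g y - g x\<bar> \<le> (\<bar>D\<bar> + 1) * \<bar>y - x\<bar>"
      using y by (simp add: abs_divide divide_less_eq)
    then have "dist (psi g y) (psi g x) \<le> (\<bar>D\<bar> + 2) * \<bar>y - x\<bar>"
      using dist_psi_le[of g y x] by (simp add: algebra_simps)
    also have "\<dots> \<le> (\<bar>D\<bar> + 2) * \<bar>y - z\<bar>" using y z by (intro mult_left_mono) auto
    also have "\<dots> \<le> (\<bar>D\<bar> + 2) * dist (psi g y) (psi g z)"
      using abs_diff_le_dist_psi[of y z g] by (intro mult_left_mono) auto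
    finally show "dist (psi g y) (psi g x) \<le> (\<bar>D\<bar> + 2) * dist (psi g y) (psi g z)" .
  qed
qed

text \<open>Then \<open>g x\<close> lies between \<open>g y\<close> and \<open>g z\<close> whenever \<open>y < x < z\<close> are close to \<open>x\<close>.\<close>
lemma M_point_if_eventually_sign:
  assumes "\<sigma> \<noteq> 0" and "eventually (\<lambda>h. 0 < \<sigma> * ((g (x + h) - g x) / h)) (at 0)"
  shows "M_point g x"
proof -
  obtain d where d: "d > 0"
    and sign: "\<And>h. h \<noteq> 0 \<Longrightarrow> \<bar>h\<bar> < d \<Longrightarrow> 0 < \<sigma> * ((g (x + h) - g x) / h)"
    using assms(2) by (rule eventually_at_0_realE) blast
  show ?thesis
  proof (rule M_point_if_bound[OF d, where c = 1])
    fix y z assume y: "y \<in> {x-d<..<x}" and z: "z \<in> {x<..<x+d}"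
    have "\<sigma> * (g y - g x) < 0"
      using sign[of "y - x"] y by (auto simp: zero_less_mult_iff zero_less_divide_iff)
    moreover have "0 < \<sigma> * (g z - g x)"
      using sign[of "z - x"] z by (auto simp: zero_less_mult_iff zero_less_divide_iff)
    ultimately have "\<bar>g y - g x\<bar> \<le> \<bar>g y - g z\<bar>"
      by (auto simp: mult_less_0_iff zero_less_mult_iff)
    then show "dist (psi g y) (psi g x) \<le> 1 * dist (psi g y) (psi g z)"
      using dist_psi_mono[of y x z g] y z by simp
  qed
qed

lemma M_point_if_difference_quotient_at_top:
  assumes "filterlim (\<lambda>h. (g (x + h) - g x) / h) at_top (at 0)"
  shows "M_point g x"
proof (rule M_point_if_eventually_sign[of 1])
  show "eventually (\<lambda>h. 0 < 1 * ((g (x + h) - g x) / h)) (at 0)"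
    using assms unfolding filterlim_at_top_dense by auto
qed simp

lemma M_point_if_difference_quotient_at_bot:
  assumes "filterlim (\<lambda>h. (g (x + h) - g x) / h) at_bot (at 0)"
  shows "M_point g x"
proof (rule M_point_if_eventually_sign[of "-1"])
  have "eventually (\<lambda>h. (g (x + h) - g x) / h < 0) (at 0)"
    using assms unfolding filterlim_at_bot_dense by blast
  then show "eventually (\<lambda>h. 0 < -1 * ((g (x + h) - g x) / h)) (at 0)"
    by eventually_elim linarith
qed simp

section \<open>Monotone subsets of graphs\<close>

lemma interior_closure_uniformly_discrete:
  fixes S :: "real set"
  assumes "e > 0" and discrete: "\<forall>x\<in>S. \<forall>y\<in>S. dist y x < e \<longrightarrow> y = x"
  shows "interior (closure S) = {}"
proof -
  have "interior S = {}"
  proof (rule ccontr)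
    assume "interior S \<noteq> {}"
    then obtain t where "t \<in> interior S" by blast
    then obtain r where "r > 0" "ball t r \<subseteq> S"
      using open_contains_ball[of "interior S"] interior_subset by blast
    define m where "m = min r e / 2"
    have m: "0 < m" "m < r" "m < e" unfolding m_def using \<open>r > 0\<close> \<open>e > 0\<close> by auto
    then have "t \<in> S" "t + m \<in> S" using \<open>ball t r \<subseteq> S\<close> \<open>r > 0\<close> by (auto simp: dist_real_def)
    then show False using discrete m by (force simp: dist_real_def)
  qed
  then show ?thesis using discrete_imp_closed[OF assms] by (simp add: closure_closed)
qed

lemma interior_closure_diff_interior_closure:
  fixes P :: "real set"
  shows "interior (closure (P - interior (closure P))) = {}"
proof -
  let ?M = "P - interior (closure P)"
  have "interior (closure ?M) \<subseteq> interior (closure P)"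
    by (intro interior_mono closure_mono) auto
  then have "interior (closure ?M) \<inter> ?M = {}" by blast
  then have "interior (closure ?M) \<inter> closure ?M = {}"
    by (simp add: open_Int_closure_eq_empty)
  then show ?thesis using interior_subset by blast
qed

lemma nowhere_dense_in_graph_image:
  assumes cont: "continuous_on UNIV g" and M: "interior (closure M) = {}"
  shows "nowhere_dense_in (subtopology euclidean (graph g)) (psi g ` M)"
proof -
  let ?X = "subtopology euclidean (graph g)"
  have "homeomorphic_maps euclideanreal ?X (psi g) fst"
    unfolding homeomorphic_maps_def
  proof (intro conjI)
    show "continuous_map euclideanreal ?X (psi g)"
      by (simp add: continuous_map_in_subtopology continuous_on_psi[OF cont] graph_def)
    show "continuous_map ?X euclideanreal fst"
      by (simp add: continuous_map_iff_continuous continuous_on_fst)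
  qed (auto simp: psi_def graph_def)
  then have h: "homeomorphic_map euclideanreal ?X (psi g)"
    using homeomorphic_map_maps by blast
  have "?X closure_of (psi g ` M) = psi g ` closure M"
    using homeomorphic_map_closure_of[OF h, of M] by (simp add: euclidean_closure_of)
  moreover have "?X interior_of (psi g ` closure M) = psi g ` interior (closure M)"
    using homeomorphic_map_interior_of[OF h, of "closure M"] by (simp add: euclidean_interior_of)
  moreover have "psi g ` M \<subseteq> topspace ?X" by (auto simp: graph_def)
  ultimately show ?thesis unfolding nowhere_dense_in_def using M by simp
qed

lemma M_bound_extends_to_closure:
  assumes cont: "continuous_on UNIV g"
    and A: "open A" "A \<subseteq> closure P" and B: "open B" "B \<subseteq> closure P"
    and bound: "\<And>x z. x \<in> A \<inter> P \<Longrightarrow> z \<in> B \<inter> P \<Longrightarrow>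
          dist (psi g x) (psi g u) \<le> c * dist (psi g x) (psi g z)"
    and x: "x \<in> A" and z: "z \<in> B"
  shows "dist (psi g x) (psi g u) \<le> c * dist (psi g x) (psi g z)"
proof -
  let ?F = "{w. dist (psi g (fst w)) (psi g u) \<le> c * dist (psi g (fst w)) (psi g (snd w))}"
  have "continuous_on UNIV (\<lambda>w. psi g (fst w))" "continuous_on UNIV (\<lambda>w. psi g (snd w))"
    by (rule continuous_on_compose2[OF continuous_on_psi[OF cont]], rule continuous_on_fst continuous_on_snd,
        rule continuous_on_id, simp)+
  then have "closed ?F"
    by (intro closed_Collect_le continuous_on_dist continuous_on_mult continuous_on_const)
  moreover have "(A \<inter> P) \<times> (B \<inter> P) \<subseteq> ?F" using bound by force
  ultimately have F: "closure ((A \<inter> P) \<times> (B \<inter> P)) \<subseteq> ?F" by (intro closure_minimal)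
  have "x \<in> closure (A \<inter> P)" "z \<in> closure (B \<inter> P)"
    using open_Int_closure_subset[OF A(1), of P] open_Int_closure_subset[OF B(1), of P] A(2) B(2) x z
    by blast+
  then have "(x, z) \<in> ?F" using F unfolding closure_Times by blast
  then show ?thesis by simp
qed

lemma separated_set_away_from_closure:
  assumes cont: "continuous_on UNIV g" and K: "K > 0"
    and sep: "\<And>p q. p \<in> Q1 \<Longrightarrow> q \<in> Q2 \<Longrightarrow> \<bar>q - u\<bar> \<le> K * dist (psi g p) (psi g q)"
    and s: "s \<in> closure Q1" "s \<noteq> u"
  shows "\<exists>\<eta>>0. \<forall>q\<in>Q2. \<eta> \<le> \<bar>q - s\<bar>"
proof -
  define e where "e = \<bar>s - u\<bar>"
  have e: "e > 0" using s(2) unfolding e_def by simp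
  have "isCont (psi g) s" using continuous_on_psi[OF cont] by (simp add: continuous_on_eq_continuous_at)
  moreover have "e / (4*K) > 0" using e K by simp
  ultimately obtain \<eta> where "\<eta> > 0"
    and \<eta>: "\<And>t. dist t s < \<eta> \<Longrightarrow> dist (psi g t) (psi g s) < e / (4*K)"
    unfolding continuous_at_eps_delta by blast
  obtain p where p: "p \<in> Q1" "dist p s < \<eta>" using s(1) \<open>\<eta> > 0\<close> closure_approachable by blast
  have "min \<eta> (e/2) \<le> \<bar>q - s\<bar>" if q: "q \<in> Q2" for q
  proof (rule ccontr)
    assume "\<not> min \<eta> (e/2) \<le> \<bar>q - s\<bar>"
    then have "dist q s < \<eta>" and "\<bar>q - s\<bar> < e / 2" by (auto simp: dist_real_def min_le_iff_disj)
    then have "dist (psi g p) (psi g q) < e / (4*K) + e / (4*K)"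
      using p(2) by (intro dist_triangle_less_add[of _ "psi g s"] \<eta>)
    then have "\<bar>q - u\<bar> < K * (e / (4*K) + e / (4*K))"
      using sep[OF p(1) q] mult_strict_left_mono[OF _ K] by fastforce
    also have "\<dots> = e / 2" using K by (simp add: field_simps)
    finally show False
      using \<open>\<bar>q - s\<bar> < e / 2\<close> unfolding e_def by (simp add: abs_if split: if_splits)
  qed
  then show ?thesis using \<open>\<eta> > 0\<close> e by (intro exI[of _ "min \<eta> (e/2)"]) auto
qed

text \<open>With \<open>s = sup (Q\<^sub>1 \<inter> [a, b])\<close>, the set \<open>Q\<^sub>1\<close> avoids \<open>(s, b]\<close> and \<open>Q\<^sub>2\<close> avoids a
  neighbourhood of \<open>s\<close>.\<close>
lemma gap_between_separated_sets:
  assumes cont: "continuous_on UNIV g" and K: "K > 0"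
    and sep: "\<And>p q. p \<in> Q1 \<Longrightarrow> q \<in> Q2 \<Longrightarrow> \<bar>q - u\<bar> \<le> K * dist (psi g p) (psi g q)"
    and a: "a \<in> Q1" and b: "b \<in> Q2" and "a < b" and u: "u \<notin> {a..b}"
  shows "\<exists>\<alpha> \<beta>. a \<le> \<alpha> \<and> \<alpha> < \<beta> \<and> \<beta> \<le> b \<and> {\<alpha><..<\<beta>} \<inter> (Q1 \<union> Q2) = {}"
proof -
  define T where "T = Q1 \<inter> {a..b}"
  define s where "s = Sup T"
  have T: "a \<in> T" "bdd_above T"
    unfolding T_def using a \<open>a < b\<close> by (auto intro: bdd_aboveI[of _ b])
  have le_s: "x \<le> s" if "x \<in> T" for x unfolding s_def using cSup_upper[OF that T(2)] .
  have "s \<le> b" unfolding s_def by (rule cSup_least) (use T(1) in \<open>auto simp: T_def\<close>)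
  then have s: "a \<le> s" "s \<le> b" using le_s[OF T(1)] by auto
  have "s \<in> closure T" unfolding s_def using T by (intro closure_contains_Sup) auto
  moreover have "closure T \<subseteq> closure Q1" unfolding T_def by (intro closure_mono) simp
  ultimately have "s \<in> closure Q1" by blast
  moreover have "s \<noteq> u" using s u by auto
  ultimately have "\<exists>\<eta>>0. \<forall>q\<in>Q2. \<eta> \<le> \<bar>q - s\<bar>"
    using separated_set_away_from_closure[OF cont K sep] by simp
  then obtain \<eta> where "\<eta> > 0" and far: "\<And>q. q \<in> Q2 \<Longrightarrow> \<eta> \<le> \<bar>q - s\<bar>" by blast
  have "s < b" using far[OF b] \<open>\<eta> > 0\<close> s by auto
  have "{s<..<min (s + \<eta>) b} \<inter> (Q1 \<union> Q2) = {}"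
  proof (intro equals0I)
    fix t assume t: "t \<in> {s<..<min (s + \<eta>) b} \<inter> (Q1 \<union> Q2)"
    have "t \<notin> T" using le_s t by fastforce
    then have "t \<notin> Q1" using t s unfolding T_def by auto
    then show False using t far[of t] by auto
  qed
  then show ?thesis using s \<open>s < b\<close> \<open>\<eta> > 0\<close> by (intro exI[of _ s] exI[of _ "min (s + \<eta>) b"]) auto
qed

definition local_maxima :: "(real \<Rightarrow> real \<Rightarrow> bool) \<Rightarrow> real set \<Rightarrow> real \<Rightarrow> real set" where
  "local_maxima R P e = {u \<in> P. \<forall>v\<in>P. v \<noteq> u \<and> \<bar>v - u\<bar> < e \<longrightarrow> R v u}"

lemma interior_closure_local_maxima:
  assumes asym: "\<And>a b. R a b \<Longrightarrow> \<not> R b a" and "e > 0"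
  shows "interior (closure (local_maxima R P e)) = {}"
proof (rule interior_closure_uniformly_discrete[OF \<open>e > 0\<close>], intro ballI impI)
  fix x y assume x: "x \<in> local_maxima R P e" and y: "y \<in> local_maxima R P e" and "dist y x < e"
  then have "\<bar>y - x\<bar> < e" "\<bar>x - y\<bar> < e" by (simp_all add: dist_real_def abs_minus_commute)
  show "y = x"
  proof (rule ccontr)
    assume "y \<noteq> x"
    then have "R y x" "R x y"
      using x y \<open>\<bar>y - x\<bar> < e\<close> \<open>\<bar>x - y\<bar> < e\<close> unfolding local_maxima_def by auto
    then show False using asym by blast
  qed
qed

text \<open>\<open>P\<close> is the projection of a subset of the graph of \<open>g\<close> and \<open>\<sqsubset>\<close> the pulled-back order.\<close>
locale graph_monotone =
  fixes g :: "real \<Rightarrow> real" and P :: "real set"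
    and less :: "real \<Rightarrow> real \<Rightarrow> bool" (infix "\<sqsubset>" 50) and c :: real
  assumes continuous: "continuous_on UNIV g"
    and total: "\<And>a b. a \<in> P \<Longrightarrow> b \<in> P \<Longrightarrow> a \<noteq> b \<Longrightarrow> a \<sqsubset> b \<or> b \<sqsubset> a"
    and asym: "\<And>a b. a \<sqsubset> b \<Longrightarrow> \<not> b \<sqsubset> a"
    and c_nonneg: "0 \<le> c"
    and monotone: "\<And>a b d. a \<in> P \<Longrightarrow> b \<in> P \<Longrightarrow> d \<in> P \<Longrightarrow> a \<sqsubset> b \<Longrightarrow> b \<sqsubset> d \<Longrightarrow>
      dist (psi g a) (psi g b) \<le> c * dist (psi g a) (psi g d)"
begin

lemma separated:
  assumes "p \<in> P" "q \<in> P" "u \<in> P" "p \<sqsubset> u" "u \<sqsubset> q"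
  shows "\<bar>p - u\<bar> \<le> (c + 1) * dist (psi g p) (psi g q)"
    and "\<bar>q - u\<bar> \<le> (c + 1) * dist (psi g p) (psi g q)"
proof -
  have m: "dist (psi g p) (psi g u) \<le> c * dist (psi g p) (psi g q)" by (rule monotone[OF assms(1,3,2,4,5)])
  have "\<bar>p - u\<bar> \<le> dist (psi g p) (psi g u)" by (rule abs_diff_le_dist_psi)
  then show "\<bar>p - u\<bar> \<le> (c + 1) * dist (psi g p) (psi g q)"
    unfolding distrib_right using m zero_le_dist[of "psi g p" "psi g q"] by linarith
  have "\<bar>q - u\<bar> \<le> dist (psi g q) (psi g u)" by (rule abs_diff_le_dist_psi)
  also have "\<dots> \<le> dist (psi g p) (psi g q) + dist (psi g p) (psi g u)" by (rule dist_triangle3)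
  finally show "\<bar>q - u\<bar> \<le> (c + 1) * dist (psi g p) (psi g q)"
    using m by (simp add: distrib_right)
qed

text \<open>A change of order inside the interval would, by \<open>gap_between_separated_sets\<close>, leave a
  gap in \<open>P\<close> where \<open>P\<close> is dense.\<close>
lemma one_side_on_dense_interval:
  assumes dense: "{l<..<h} \<subseteq> closure P" and u: "u \<in> P" "u \<notin> {l<..<h}"
  shows "(\<forall>a\<in>P \<inter> {l<..<h}. a \<sqsubset> u) \<or> (\<forall>a\<in>P \<inter> {l<..<h}. u \<sqsubset> a)"
proof (rule ccontr)
  assume "\<not> ?thesis"
  then obtain a b where ab: "a \<in> P \<inter> {l<..<h}" "b \<in> P \<inter> {l<..<h}" "\<not> a \<sqsubset> u" "\<not> u \<sqsubset> b"
    by blast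
  moreover have "a \<noteq> u" "b \<noteq> u" using ab u by auto
  ultimately have "u \<sqsubset> a" "b \<sqsubset> u" using total[of a u] total[of b u] u(1) by blast+
  define Q1 where "Q1 = {p \<in> P. p \<sqsubset> u}"
  define Q2 where "Q2 = {q \<in> P. u \<sqsubset> q}"
  have a: "a \<in> Q2" and b: "b \<in> Q1" using ab \<open>u \<sqsubset> a\<close> \<open>b \<sqsubset> u\<close> unfolding Q1_def Q2_def by auto
  have K: "c + 1 > 0" using c_nonneg by simp
  have sep12: "\<bar>q - u\<bar> \<le> (c + 1) * dist (psi g p) (psi g q)" if "p \<in> Q1" "q \<in> Q2" for p q
    using separated(2)[of p q u] that u unfolding Q1_def Q2_def by blast
  have sep21: "\<bar>p - u\<bar> \<le> (c + 1) * dist (psi g q) (psi g p)" if "q \<in> Q2" "p \<in> Q1" for q p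
    using separated(1)[of p q u] that u unfolding Q1_def Q2_def by (simp add: dist_commute)
  have "a \<noteq> b" using asym \<open>u \<sqsubset> a\<close> \<open>b \<sqsubset> u\<close> by blast
  have u_out: "u \<notin> {min a b..max a b}" using ab u by auto
  then have "\<exists>\<alpha> \<beta>. min a b \<le> \<alpha> \<and> \<alpha> < \<beta> \<and> \<beta> \<le> max a b \<and> {\<alpha><..<\<beta>} \<inter> (Q1 \<union> Q2) = {}"
  proof (cases "a < b")
    case True
    then show ?thesis
      using gap_between_separated_sets[OF continuous K sep21 a b True] u_out
      by (simp add: Un_commute)
  next
    case False
    then have "b < a" using \<open>a \<noteq> b\<close> by simp
    then show ?thesis
      using gap_between_separated_sets[OF continuous K sep12 b a \<open>b < a\<close>] u_out by simp
  qed
  then obtain \<alpha> \<beta> where \<alpha>\<beta>: "min a b \<le> \<alpha>" "\<alpha> < \<beta>" "\<beta> \<le> max a b"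
    and gap: "{\<alpha><..<\<beta>} \<inter> (Q1 \<union> Q2) = {}" by blast
  have "{\<alpha><..<\<beta>} \<subseteq> {l<..<h}" using \<alpha>\<beta> ab by (auto simp: min_le_iff_disj le_max_iff_disj)
  then have "{\<alpha><..<\<beta>} \<subseteq> closure P" using dense by blast
  moreover have "{\<alpha><..<\<beta>} \<noteq> {}" using \<open>\<alpha> < \<beta>\<close> by simp
  ultimately have "{\<alpha><..<\<beta>} \<inter> closure P \<noteq> {}" by blast
  then have "{\<alpha><..<\<beta>} \<inter> P \<noteq> {}" using open_Int_closure_eq_empty[OF open_greaterThanLessThan] by blast
  then obtain t where t: "t \<in> P" "\<alpha> < t" "t < \<beta>" by auto
  then have "t \<noteq> u" using \<alpha>\<beta> ab u by auto
  then have "t \<in> Q1 \<union> Q2" using total[OF t(1) u(1)] t(1) unfolding Q1_def Q2_def by auto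
  then show False using gap t by auto
qed

lemma M_point_if_increasing_across:
  assumes "\<delta> > 0" "{u-\<delta><..<u} \<subseteq> closure P" "{u<..<u+\<delta>} \<subseteq> closure P" "u \<in> P"
    and "\<forall>a\<in>P \<inter> {u-\<delta><..<u}. a \<sqsubset> u" "\<forall>a\<in>P \<inter> {u<..<u+\<delta>}. u \<sqsubset> a"
  shows "M_point g u"
proof (rule M_point_if_bound[OF \<open>\<delta> > 0\<close>])
  fix x z assume "x \<in> {u-\<delta><..<u}" "z \<in> {u<..<u+\<delta>}"
  then show "dist (psi g x) (psi g u) \<le> c * dist (psi g x) (psi g z)"
  proof (rule M_bound_extends_to_closure[OF continuous open_greaterThanLessThan assms(2)
        open_greaterThanLessThan assms(3), rotated -2])
    fix x' z' assume "x' \<in> {u-\<delta><..<u} \<inter> P" "z' \<in> {u<..<u+\<delta>} \<inter> P"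
    then show "dist (psi g x') (psi g u) \<le> c * dist (psi g x') (psi g z')"
      using assms(4-6) by (intro monotone) auto
  qed
qed

lemma M_point_minus_if_decreasing_across:
  assumes even: "\<And>t. g (- t) = g t"
    and "\<delta> > 0" "{u-\<delta><..<u} \<subseteq> closure P" "{u<..<u+\<delta>} \<subseteq> closure P" "u \<in> P"
    and "\<forall>a\<in>P \<inter> {u-\<delta><..<u}. u \<sqsubset> a" "\<forall>a\<in>P \<inter> {u<..<u+\<delta>}. a \<sqsubset> u"
  shows "M_point g (- u)"
proof (rule M_point_minus_if_bound[of g, OF even \<open>\<delta> > 0\<close>])
  fix x z assume "x \<in> {u<..<u+\<delta>}" "z \<in> {u-\<delta><..<u}"
  then show "dist (psi g x) (psi g u) \<le> c * dist (psi g x) (psi g z)"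
  proof (rule M_bound_extends_to_closure[OF continuous open_greaterThanLessThan assms(4)
        open_greaterThanLessThan assms(3), rotated -2])
    fix x' z' assume "x' \<in> {u<..<u+\<delta>} \<inter> P" "z' \<in> {u-\<delta><..<u} \<inter> P"
    then show "dist (psi g x') (psi g u) \<le> c * dist (psi g x') (psi g z')"
      using assms(5-7) by (intro monotone) auto
  qed
qed

lemma interior_point_local_extremum:
  assumes even: "\<And>t. g (- t) = g t" and no_M: "\<And>y. \<not> M_point g y"
    and u: "u \<in> P" "u \<in> interior (closure P)"
  shows "\<exists>n. u \<in> local_maxima (\<sqsubset>) P (1 / Suc n) \<union> local_maxima (\<lambda>a b. b \<sqsubset> a) P (1 / Suc n)"
proof -
  obtain \<delta> where "\<delta> > 0" and ball: "ball u \<delta> \<subseteq> closure P"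
    using u(2) open_contains_ball[of "interior (closure P)"] interior_subset by blast
  let ?L = "{u-\<delta><..<u}" and ?R = "{u<..<u+\<delta>}"
  have "?L \<subseteq> ball u \<delta>" "?R \<subseteq> ball u \<delta>" by (auto simp: dist_real_def)
  then have LR: "?L \<subseteq> closure P" "?R \<subseteq> closure P" using ball by auto
  obtain n where n: "inverse (real (Suc n)) < \<delta>" using reals_Archimedean[OF \<open>\<delta> > 0\<close>] by blast
  have near: "v \<in> P \<inter> (?L \<union> ?R)" if "v \<in> P" "v \<noteq> u" "\<bar>v - u\<bar> < 1 / Suc n" for v
    using that n by (auto simp: inverse_eq_divide abs_if split: if_splits)
  have "(\<forall>a\<in>P \<inter> ?L. a \<sqsubset> u) \<or> (\<forall>a\<in>P \<inter> ?L. u \<sqsubset> a)"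
    using one_side_on_dense_interval[OF LR(1) u(1)] by simp
  moreover have "(\<forall>a\<in>P \<inter> ?R. a \<sqsubset> u) \<or> (\<forall>a\<in>P \<inter> ?R. u \<sqsubset> a)"
    using one_side_on_dense_interval[OF LR(2) u(1)] by simp
  moreover have "\<not> ((\<forall>a\<in>P \<inter> ?L. a \<sqsubset> u) \<and> (\<forall>a\<in>P \<inter> ?R. u \<sqsubset> a))"
    using M_point_if_increasing_across[OF \<open>\<delta> > 0\<close> LR u(1)] no_M by blast
  moreover have "\<not> ((\<forall>a\<in>P \<inter> ?L. u \<sqsubset> a) \<and> (\<forall>a\<in>P \<inter> ?R. a \<sqsubset> u))"
    using M_point_minus_if_decreasing_across[OF even \<open>\<delta> > 0\<close> LR u(1)] no_M by blast
  ultimately consider "\<forall>a\<in>P \<inter> (?L \<union> ?R). a \<sqsubset> u" | "\<forall>a\<in>P \<inter> (?L \<union> ?R). u \<sqsubset> a"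
    by blast
  then show ?thesis
  proof cases
    case 1
    then have "u \<in> local_maxima (\<sqsubset>) P (1 / Suc n)"
      unfolding local_maxima_def using u(1) near by blast
    then show ?thesis by blast
  next
    case 2
    then have "u \<in> local_maxima (\<lambda>a b. b \<sqsubset> a) P (1 / Suc n)"
      unfolding local_maxima_def using u(1) near by blast
    then show ?thesis by blast
  qed
qed
end

lemma graph_monotone_if_monotone_metric:
  assumes "continuous_on UNIV g" and r: "strict_linear_order_on S r" and "c > 0"
    and mono: "\<forall>x\<in>S. \<forall>y\<in>S. \<forall>z\<in>S. (x, y) \<in> r \<and> (y, z) \<in> r \<longrightarrow> dist x y \<le> c * dist x z"
  shows "graph_monotone g {t. psi g t \<in> S} (\<lambda>a b. (psi g a, psi g b) \<in> r) c"
proof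
  fix a b assume "a \<in> {t. psi g t \<in> S}" "b \<in> {t. psi g t \<in> S}" "a \<noteq> b"
  moreover have "psi g a \<noteq> psi g b" using \<open>a \<noteq> b\<close> by (simp add: psi_def)
  ultimately show "(psi g a, psi g b) \<in> r \<or> (psi g b, psi g a) \<in> r"
    using r unfolding strict_linear_order_on_def total_on_def by blast
next
  fix a b assume "(psi g a, psi g b) \<in> r"
  then show "(psi g b, psi g a) \<notin> r"
    using r unfolding strict_linear_order_on_def trans_def irrefl_def by blast
next
  fix a b d assume "a \<in> {t. psi g t \<in> S}" "b \<in> {t. psi g t \<in> S}" "d \<in> {t. psi g t \<in> S}"
    "(psi g a, psi g b) \<in> r" "(psi g b, psi g d) \<in> r"
  then show "dist (psi g a) (psi g b) \<le> c * dist (psi g a) (psi g d)" using mono by blast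
qed (use assms(1,3) in simp_all)

theorem meager_in_graph_if_monotone:
  assumes cont: "continuous_on UNIV g" and even: "\<And>t. g (- t) = g t"
    and no_M: "\<And>y. \<not> M_point g y"
    and S: "S \<subseteq> graph g" "monotone_metric S"
  shows "meager_in (subtopology euclidean (graph g)) S"
proof -
  obtain r c where r: "strict_linear_order_on S r" and "c > 0"
    and mono: "\<forall>x\<in>S. \<forall>y\<in>S. \<forall>z\<in>S. (x, y) \<in> r \<and> (y, z) \<in> r \<longrightarrow> dist x y \<le> c * dist x z"
    using S(2) unfolding monotone_metric_def by blast
  define P where "P = {t. psi g t \<in> S}"
  define less where "less = (\<lambda>a b. (psi g a, psi g b) \<in> r)"
  interpret graph_monotone g P less c
    unfolding P_def less_def using cont r \<open>c > 0\<close> mono by (rule graph_monotone_if_monotone_metric)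
  define N where "N = insert (P - interior (closure P))
    (range (\<lambda>n. local_maxima less P (1 / Suc n)) \<union> range (\<lambda>n. local_maxima (\<lambda>a b. less b a) P (1 / Suc n)))"
  have "interior (closure M) = {}" if "M \<in> N" for M
    using that interior_closure_diff_interior_closure[of P]
      interior_closure_local_maxima[of less, OF asym]
      interior_closure_local_maxima[of "\<lambda>a b. less b a", OF asym]
    unfolding N_def by auto
  then have "nowhere_dense_in (subtopology euclidean (graph g)) M" if "M \<in> (`) (psi g) ` N" for M
    using that nowhere_dense_in_graph_image[OF cont] by blast
  moreover have "countable ((`) (psi g) ` N)" unfolding N_def by simp
  moreover have "S \<subseteq> \<Union> ((`) (psi g) ` N)"
  proof
    fix s assume "s \<in> S"
    then obtain u where s: "s = psi g u" and "u \<in> P" using S(1) unfolding graph_def P_def by auto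
    have "\<exists>M\<in>N. u \<in> M"
    proof (cases "u \<in> interior (closure P)")
      case True
      then show ?thesis using interior_point_local_extremum[OF even no_M \<open>u \<in> P\<close>]
        unfolding N_def by blast
    next
      case False
      then show ?thesis using \<open>u \<in> P\<close> unfolding N_def by blast
    qed
    then show "s \<in> \<Union> ((`) (psi g) ` N)" unfolding s by blast
  qed
  ultimately show ?thesis unfolding meager_in_def by blast
qed

theorem proposition4p8:
  shows "continuous_on UNIV f48
    \<and> (\<forall>y. \<not> M_point f48 y)
    \<and> (\<forall>S. S \<subseteq> graph f48 \<and> monotone_metric S \<longrightarrow>
           meager_in (subtopology euclidean (graph f48)) S)
    \<and> (\<forall>x. \<not> (\<exists>D. (f48 has_real_derivative D) (at x))
          \<and> \<not> filterlim (\<lambda>h. (f48 (x + h) - f48 x) / h) at_top (at 0)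
          \<and> \<not> filterlim (\<lambda>h. (f48 (x + h) - f48 x) / h) at_bot (at 0))"
  using continuous_on_f48 f48_not_M_point
    meager_in_graph_if_monotone[OF continuous_on_f48 f48_minus f48_not_M_point]
    M_point_if_has_real_derivative M_point_if_difference_quotient_at_top
    M_point_if_difference_quotient_at_bot
  by blast

end
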